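(* Let $\epsilon > 0$ and $\delta \in (0,1)$, and set $d = \lceil \ln(1/\delta) \rceil$ and $w = 1 + \lceil e/\epsilon \rceil$. Consider a stream of $N$ records. Each record $r$ has a primary key (record id) $r_0$ and values $r_1,\dots,r_p$ on $p$ searchable attributes $a_1,\dots,a_p$; $\mathcal{D}(a_i)$ denotes the domain of $a_i$. Choose $d \cdot p$ hash functions $h_i^j : \mathcal{D}(a_i) \to \{1,\dots,w\}$, for $i \in \{1,\dots,p\}$ and $j \in \{1,\dots,d\}$, uniformly at random from a pairwise-independent family. Build $p$ arrays $CM_1,\dots,CM_p$, each of size $w \times d$, every cell of which initially holds an empty set of record ids. Each record $r$ is inserted by adding $r_0$ to the cell $CM_i[j, h_i^j(r_i)]$ for every $i \in \{1,\dots,p\}$ and every $j \in \{1,\dots,d\}$. A query $q = (q_1,\dots,q_p)$ consists of one equality predicate $a_i = q_i$ on each of the $p$ attributes. Let $f(q)$ be the number of records $r$ in the stream with $r_i = q_i$ for all $i$. Define the estimate $$\hat f(q) = \min_{j=1,\dots,d} \left| \bigcap_{i=1}^{p} CM_i[j, h_i^j(q_i)] \right|.$$ Then $$\Pr\big(|\hat f(q) - f(q)| \le \epsilon N\big) \ge 1 - \delta.$$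
   Context: This describes a sketch that extends the Count-min sketch by storing record ids in each cell. The probability is taken over the random choice of the hash functions. Record ids are distinct across records. *)

theory Defs
  imports "HOL-Probability.Probability"
begin

text \<open>A record is a pair (record id r0, attribute values i |-> r_i); attributes are indexed 1..p.
  All attribute domains live in one ambient type 'a; D i is the domain of attribute a_i.\<close>
type_synonym ('b, 'a) srecord = "'b \<times> (nat \<Rightarrow> 'a)"

definition pairwise_indep_family :: "('a \<Rightarrow> nat) set \<Rightarrow> 'a set \<Rightarrow> nat \<Rightarrow> bool" where
  "pairwise_indep_family H D w \<longleftrightarrow>
     finite H \<and> H \<noteq> {} \<and>
     (\<forall>h\<in>H. \<forall>x\<in>D. h x \<in> {1..w}) \<and>
     (\<forall>x\<in>D. \<forall>y\<in>D. x \<noteq> y \<longrightarrow> (\<forall>a\<in>{1..w}. \<forall>b\<in>{1..w}.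
        real (card {h\<in>H. h x = a \<and> h y = b}) / real (card H) = 1 / (real w)^2))"

text \<open>Sketch: CM i j c is the cell in row j, column c of array CM_i (sets of record ids).
  hs (i,j) is the hash function h_i^j.\<close>
definition empty_sketch :: "nat \<Rightarrow> nat \<Rightarrow> nat \<Rightarrow> 'b set" where
  "empty_sketch = (\<lambda>i j c. {})"

definition insert_record ::
  "nat \<Rightarrow> nat \<Rightarrow> (nat \<times> nat \<Rightarrow> 'a \<Rightarrow> nat) \<Rightarrow> ('b, 'a) srecord
     \<Rightarrow> (nat \<Rightarrow> nat \<Rightarrow> nat \<Rightarrow> 'b set) \<Rightarrow> (nat \<Rightarrow> nat \<Rightarrow> nat \<Rightarrow> 'b set)" where
  "insert_record p d hs r CM = (\<lambda>i j c.
     if i \<in> {1..p} \<and> j \<in> {1..d} \<and> c = hs (i, j) (snd r i)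
     then insert (fst r) (CM i j c) else CM i j c)"

definition build_sketch ::
  "nat \<Rightarrow> nat \<Rightarrow> (nat \<times> nat \<Rightarrow> 'a \<Rightarrow> nat) \<Rightarrow> ('b, 'a) srecord list
     \<Rightarrow> (nat \<Rightarrow> nat \<Rightarrow> nat \<Rightarrow> 'b set)" where
  "build_sketch p d hs rs = fold (insert_record p d hs) rs empty_sketch"

definition estimate ::
  "nat \<Rightarrow> nat \<Rightarrow> (nat \<times> nat \<Rightarrow> 'a \<Rightarrow> nat) \<Rightarrow> ('b, 'a) srecord list \<Rightarrow> (nat \<Rightarrow> 'a) \<Rightarrow> nat" where
  "estimate p d hs rs q =
     (let CM = build_sketch p d hs rs in
      Min ((\<lambda>j. card (\<Inter>i\<in>{1..p}. CM i j (hs (i, j) (q i)))) ` {1..d}))"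

definition true_freq :: "nat \<Rightarrow> ('b, 'a) srecord list \<Rightarrow> (nat \<Rightarrow> 'a) \<Rightarrow> nat" where
  "true_freq p rs q = length (filter (\<lambda>r. \<forall>i\<in>{1..p}. snd r i = q i) rs)"

definition sketch_depth :: "real \<Rightarrow> nat" where
  "sketch_depth \<delta> = nat \<lceil>ln (1 / \<delta>)\<rceil>"

definition sketch_width :: "real \<Rightarrow> nat" where
  "sketch_width \<epsilon> = 1 + nat \<lceil>exp 1 / \<epsilon>\<rceil>"

definition hash_choice :: "nat \<Rightarrow> nat \<Rightarrow> (nat \<Rightarrow> ('a \<Rightarrow> nat) set) \<Rightarrow> (nat \<times> nat \<Rightarrow> 'a \<Rightarrow> nat) pmf" where
  "hash_choice p d H = pmf_of_set (PiE ({1..p} \<times> {1..d}) (\<lambda>(i, j). H i))"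

end

theory Submission
  imports Defs
begin

text \<open>
  In row j the intersection of the cells addressed by q contains exactly the ids of the records
  matching q, plus the false positives: records that differ from q on some attribute i yet collide
  with q under every hash function of the row. So the estimate never undercounts, and its error is
  at most the false-positive count of any single row. A record differing from q on attribute i
  collides there with probability 1/w by pairwise independence, so a row has at most N/w false
  positives in expectation, and by Markov's inequality more than \<epsilon>N of them with probability at
  most 1/(\<epsilon>w) \<le> 1/e. The d rows use independent hash functions, so all of them are bad with
  probability at most exp (-d) \<le> \<delta>.
\<close>

lemma fold_insert_record:
  "fold (insert_record p d hs) rs CM i j c =
     (if i \<in> {1..p} \<and> j \<in> {1..d}
      then CM i j c \<union> fst ` {r \<in> set rs. hs (i, j) (snd r i) = c} else CM i j c)"
proof (induction rs arbitrary: CM)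
  case Nil
  then show ?case by simp
next
  case (Cons r rs)
  then show ?case by (auto simp: insert_record_def)
qed

lemma build_sketch_cell:
  "i \<in> {1..p} \<Longrightarrow> j \<in> {1..d} \<Longrightarrow>
   build_sketch p d hs rs i j c = fst ` {r \<in> set rs. hs (i, j) (snd r i) = c}"
  by (simp add: build_sketch_def fold_insert_record empty_sketch_def)

lemma INT_image_Collect_inj_on:
  assumes "inj_on f R" "I \<noteq> {}"
  shows "(\<Inter>i\<in>I. f ` {r \<in> R. P i r}) = f ` {r \<in> R. \<forall>i\<in>I. P i r}"
  using assms by (auto simp: inj_on_def) blast

text \<open>A row of hash functions is given as t, where t i plays the role of h_i^j for a fixed j.\<close>

definition false_positives ::
  "nat set \<Rightarrow> (nat \<Rightarrow> 'a \<Rightarrow> nat) \<Rightarrow> ('b, 'a) srecord set \<Rightarrow> (nat \<Rightarrow> 'a) \<Rightarrow> nat" where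
  "false_positives I t R q =
     card {r \<in> R. (\<exists>i\<in>I. snd r i \<noteq> q i) \<and> (\<forall>i\<in>I. t i (snd r i) = t i (q i))}"

lemma card_sketch_row:
  assumes "distinct (map fst rs)" "p \<ge> 1" "j \<in> {1..d}"
  shows "card (\<Inter>i\<in>{1..p}. build_sketch p d hs rs i j (hs (i, j) (q i)))
           = true_freq p rs q + false_positives {1..p} (\<lambda>i. hs (i, j)) (set rs) q"
proof -
  let ?match = "{r \<in> set rs. \<forall>i\<in>{1..p}. snd r i = q i}"
  let ?collide = "{r \<in> set rs. \<forall>i\<in>{1..p}. hs (i, j) (snd r i) = hs (i, j) (q i)}"
  have inj: "inj_on fst (set rs)" and "distinct rs"
    using assms(1) by (simp_all add: distinct_map)
  have "(\<Inter>i\<in>{1..p}. build_sketch p d hs rs i j (hs (i, j) (q i)))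
      = (\<Inter>i\<in>{1..p}. fst ` {r \<in> set rs. hs (i, j) (snd r i) = hs (i, j) (q i)})"
    using assms(3) by (simp add: build_sketch_cell)
  also have "\<dots> = fst ` ?collide"
    by (rule INT_image_Collect_inj_on[OF inj]) (use assms(2) in auto)
  finally have "card (\<Inter>i\<in>{1..p}. build_sketch p d hs rs i j (hs (i, j) (q i))) = card ?collide"
    using inj by (simp add: card_image inj_on_subset)
  moreover have "card ?collide = card ?match + false_positives {1..p} (\<lambda>i. hs (i, j)) (set rs) q"
    unfolding false_positives_def
    by (subst card_Un_disjoint[symmetric]) (auto intro!: arg_cong[where f = card])
  moreover have "true_freq p rs q = card ?match"
    using \<open>distinct rs\<close> by (simp add: true_freq_def distinct_length_filter Int_def conj_commute)
  ultimately show ?thesis by simp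
qed

lemma estimate_error_le_false_positives:
  assumes "distinct (map fst rs)" "p \<ge> 1" "j \<in> {1..d}"
  shows "\<bar>real (estimate p d hs rs q) - real (true_freq p rs q)\<bar>
           \<le> real (false_positives {1..p} (\<lambda>i. hs (i, j)) (set rs) q)"
proof -
  define fp where "fp j = false_positives {1..p} (\<lambda>i. hs (i, j)) (set rs) q" for j
  have "estimate p d hs rs q = Min ((\<lambda>j. true_freq p rs q + fp j) ` {1..d})"
    unfolding estimate_def Let_def fp_def using card_sketch_row[OF assms(1,2)]
    by (intro arg_cong[where f = Min] image_cong) simp_all
  moreover have "Min ((\<lambda>j. true_freq p rs q + fp j) ` {1..d}) \<in> {true_freq p rs q .. true_freq p rs q + fp j}"
    using assms(3) by (auto simp: Min_ge_iff intro!: Min_le)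
  ultimately show ?thesis unfolding fp_def by auto
qed

lemma card_PiE_rows:
  assumes "finite I" "finite J" "\<forall>i\<in>I. finite (H i)"
  shows "card {hs \<in> PiE (I \<times> J) (\<lambda>(i, j). H i). \<forall>j\<in>J. P (\<lambda>i. hs (i, j))}
           = card {t \<in> PiE I H. P t} ^ card J"
proof -
  let ?A = "{hs \<in> PiE (I \<times> J) (\<lambda>(i, j). H i). \<forall>j\<in>J. P (\<lambda>i. hs (i, j))}"
  let ?B = "PiE J (\<lambda>_. {t \<in> PiE I H. P t})"
  have "bij_betw (\<lambda>hs. \<lambda>j\<in>J. \<lambda>i. hs (i, j)) ?A ?B"
  proof (rule bij_betw_byWitness[where f' = "\<lambda>G. \<lambda>(i, j)\<in>I \<times> J. G j i"])
    show "(\<lambda>hs. \<lambda>j\<in>J. \<lambda>i. hs (i, j)) ` ?A \<subseteq> ?B"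
      by (auto simp: PiE_def extensional_def Pi_def)
    show "(\<lambda>G. \<lambda>(i, j)\<in>I \<times> J. G j i) ` ?B \<subseteq> ?A"
    proof
      fix hs assume "hs \<in> (\<lambda>G. \<lambda>(i, j)\<in>I \<times> J. G j i) ` ?B"
      then obtain G where G: "G \<in> ?B" and hs: "hs = (\<lambda>(i, j)\<in>I \<times> J. G j i)" by blast
      then have "(\<lambda>i. (\<lambda>(i, j)\<in>I \<times> J. G j i) (i, j)) = G j" if "j \<in> J" for j
        using that by (auto simp: PiE_def extensional_def Pi_def fun_eq_iff)
      with G show "hs \<in> ?A" unfolding hs
        by (auto simp: PiE_def extensional_def)
    qed
  qed (auto simp: PiE_def extensional_def fun_eq_iff Pi_def)
  then have "card ?A = card ?B" by (rule bij_betw_same_card)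
  also have "\<dots> = card {t \<in> PiE I H. P t} ^ card J" using assms by (simp add: card_PiE)
  finally show ?thesis .
qed

lemma card_PiE_coordinate:
  assumes "finite I" "i \<in> I"
  shows "card {t \<in> PiE I H. P (t i)} * card (H i) = card {h \<in> H i. P h} * card (PiE I H)"
proof -
  have "{t \<in> PiE I H. P (t i)} = PiE I (\<lambda>k. if k = i then {h \<in> H k. P h} else H k)"
    using assms(2) by (auto simp: PiE_def Pi_def)
  then have "card {t \<in> PiE I H. P (t i)} = card {h \<in> H i. P h} * (\<Prod>k\<in>I - {i}. card (H k))"
    using assms by (simp add: card_PiE prod.remove)
  moreover have "card (PiE I H) = card (H i) * (\<Prod>k\<in>I - {i}. card (H k))"
    using assms by (simp add: card_PiE prod.remove)
  ultimately show ?thesis by simp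
qed

lemma card_collisions_pairwise_indep_family:
  assumes "pairwise_indep_family H D w" "x \<in> D" "y \<in> D" "x \<noteq> y"
  shows "card {h \<in> H. h x = h y} * w = card H"
proof -
  have fin: "finite H" and ne: "H \<noteq> {}" and range: "\<forall>h\<in>H. h x \<in> {1..w}"
    and pair: "\<forall>a\<in>{1..w}. real (card {h \<in> H. h x = a \<and> h y = a}) / real (card H) = 1 / (real w)\<^sup>2"
    using assms unfolding pairwise_indep_family_def by auto
  have "card H > 0" using fin ne by (simp add: card_gt_0_iff)
  have "w \<ge> 1" using ne range by fastforce
  have "{h \<in> H. h x = h y} = (\<Union>a\<in>{1..w}. {h \<in> H. h x = a \<and> h y = a})" using range by auto
  then have "card {h \<in> H. h x = h y} = (\<Sum>a\<in>{1..w}. card {h \<in> H. h x = a \<and> h y = a})"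
    using fin by (auto intro: card_UN_disjoint)
  then have "real (card {h \<in> H. h x = h y}) = (\<Sum>a\<in>{1..w}. real (card {h \<in> H. h x = a \<and> h y = a}))"
    by simp
  also have "\<dots> = (\<Sum>a\<in>{1..w}. real (card H) / (real w)\<^sup>2)"
    using pair \<open>card H > 0\<close> by (intro sum.cong) (auto simp: field_simps)
  also have "\<dots> = real (card H) / real w" using \<open>w \<ge> 1\<close> by (simp add: power2_eq_square)
  finally have "real (card {h \<in> H. h x = h y} * w) = real (card H)" using \<open>w \<ge> 1\<close> by simp
  then show ?thesis by (simp only: of_nat_eq_iff)
qed

lemma sum_false_positives_le:
  assumes "finite I" "finite R" "\<forall>i\<in>I. pairwise_indep_family (H i) (D i) w"
    and "\<forall>r\<in>R. \<forall>i\<in>I. snd r i \<in> D i" "\<forall>i\<in>I. q i \<in> D i"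
  shows "(\<Sum>t\<in>PiE I H. false_positives I t R q) * w \<le> card R * card (PiE I H)"
proof -
  let ?T = "PiE I H"
  let ?is_fp = "\<lambda>t r. (\<exists>i\<in>I. snd r i \<noteq> q i) \<and> (\<forall>i\<in>I. t i (snd r i) = t i (q i))"
  have finH: "finite (H i)" and neH: "H i \<noteq> {}" if "i \<in> I" for i
    using assms(3) that by (auto simp: pairwise_indep_family_def)
  have "finite ?T" using assms(1) finH by (simp add: finite_PiE)
  have per_record: "card {t \<in> ?T. ?is_fp t r} * w \<le> card ?T" if "r \<in> R" for r
  proof (cases "\<exists>i\<in>I. snd r i \<noteq> q i")
    case False
    then show ?thesis by simp
  next
    case True
    then obtain i where i: "i \<in> I" "snd r i \<noteq> q i" by blast
    let ?coll = "\<lambda>h. h (snd r i) = h (q i)"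
    have "card {t \<in> ?T. ?is_fp t r} * w * card (H i) \<le> card {t \<in> ?T. ?coll (t i)} * w * card (H i)"
      using \<open>finite ?T\<close> i(1) by (intro mult_right_mono card_mono) auto
    also have "\<dots> = card {h \<in> H i. ?coll h} * w * card ?T"
      using card_PiE_coordinate[OF assms(1) i(1), of H ?coll] by (simp add: ac_simps)
    also have "\<dots> = card (H i) * card ?T"
      using card_collisions_pairwise_indep_family[of "H i" "D i" w "snd r i" "q i"] assms i that
      by simp
    finally show ?thesis using finH[OF i(1)] neH[OF i(1)] by (simp add: card_gt_0_iff)
  qed
  have "(\<Sum>t\<in>?T. false_positives I t R q) = (\<Sum>r\<in>R. card {t \<in> ?T. ?is_fp t r})"
    unfolding false_positives_def
    using sum.swap_restrict[OF \<open>finite ?T\<close> assms(2), of "\<lambda>_ _. 1::nat" ?is_fp] by simp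
  then have "(\<Sum>t\<in>?T. false_positives I t R q) * w = (\<Sum>r\<in>R. card {t \<in> ?T. ?is_fp t r} * w)"
    by (simp add: sum_distrib_right)
  also have "\<dots> \<le> (\<Sum>r\<in>R. card ?T)" using per_record by (rule sum_mono)
  finally show ?thesis by simp
qed

lemma card_Markov_inequality:
  fixes X :: "'a \<Rightarrow> nat" and c :: real
  assumes "finite T" "c > 0"
  shows "card {t \<in> T. c < X t} * c \<le> (\<Sum>t\<in>T. X t)"
proof -
  have "card {t \<in> T. c < X t} * c = (\<Sum>t\<in>{t \<in> T. c < X t}. c)" by simp
  also have "\<dots> \<le> (\<Sum>t\<in>{t \<in> T. c < X t}. real (X t))" by (rule sum_mono) auto
  also have "\<dots> \<le> (\<Sum>t\<in>T. real (X t))" using assms(1) by (intro sum_mono2) auto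
  finally show ?thesis by simp
qed

lemma prob_false_positives_gt_le:
  fixes \<epsilon> :: real
  assumes "finite I" "finite R" "\<forall>i\<in>I. pairwise_indep_family (H i) (D i) w"
    and "\<forall>r\<in>R. \<forall>i\<in>I. snd r i \<in> D i" "\<forall>i\<in>I. q i \<in> D i" "\<epsilon> > 0"
  shows "measure_pmf.prob (pmf_of_set (PiE I H)) {t. \<epsilon> * card R < false_positives I t R q} * (\<epsilon> * w)
           \<le> 1"
proof -
  let ?T = "PiE I H" and ?bad = "{t \<in> PiE I H. \<epsilon> * card R < false_positives I t R q}"
  have "finite ?T" "?T \<noteq> {}"
    using assms(1,3) by (auto intro!: finite_PiE simp: pairwise_indep_family_def PiE_eq_empty_iff)
  have "card ?bad * (\<epsilon> * w) \<le> card ?T"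
  proof (cases "card R = 0")
    case True
    have "false_positives I t R q \<le> card R" for t
      unfolding false_positives_def using assms(2) by (intro card_mono) auto
    with True show ?thesis by simp
  next
    case False
    have "card R * (card ?bad * (\<epsilon> * w)) = card ?bad * (\<epsilon> * card R) * w" by simp
    also have "\<dots> \<le> real (\<Sum>t\<in>?T. false_positives I t R q) * w"
      using card_Markov_inequality[OF \<open>finite ?T\<close>, of "\<epsilon> * card R"] False assms(6)
      by (intro mult_right_mono) auto
    also have "\<dots> \<le> card R * card ?T"
      using sum_false_positives_le[OF assms(1-5)] by (metis of_nat_le_iff of_nat_mult)
    finally show ?thesis using False by simp
  qed
  then show ?thesis
    using \<open>finite ?T\<close> \<open>?T \<noteq> {}\<close> by (simp add: measure_pmf_of_set Int_def field_simps card_gt_0_iff)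
qed

lemma prob_all_rows_pmf_of_set_PiE:
  assumes "finite I" "finite J" "\<forall>i\<in>I. finite (H i) \<and> H i \<noteq> {}"
  shows "measure_pmf.prob (pmf_of_set (PiE (I \<times> J) (\<lambda>(i, j). H i))) {hs. \<forall>j\<in>J. P (\<lambda>i. hs (i, j))}
           = measure_pmf.prob (pmf_of_set (PiE I H)) {t. P t} ^ card J"
proof -
  let ?S = "PiE (I \<times> J) (\<lambda>(i, j). H i)" and ?T = "PiE I H"
  have fin: "finite ?T" "finite ?S" and ne: "?T \<noteq> {}" "?S \<noteq> {}"
    using assms by (auto intro!: finite_PiE simp: PiE_eq_empty_iff)
  have "measure_pmf.prob (pmf_of_set ?S) {hs. \<forall>j\<in>J. P (\<lambda>i. hs (i, j))}
      = card {hs \<in> ?S. \<forall>j\<in>J. P (\<lambda>i. hs (i, j))} / card ?S"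
    using fin ne by (simp add: measure_pmf_of_set Int_def)
  also have "\<dots> = card {t \<in> ?T. P t} ^ card J / card ?T ^ card J"
    using card_PiE_rows[OF assms(1,2), of H P] card_PiE_rows[OF assms(1,2), of H "\<lambda>_. True"] assms(3)
    by simp
  also have "\<dots> = measure_pmf.prob (pmf_of_set ?T) {t. P t} ^ card J"
    using fin ne by (simp add: measure_pmf_of_set Int_def power_divide)
  finally show ?thesis .
qed

lemma exp_one_le_mult_sketch_width:
  assumes "\<epsilon> > 0"
  shows "exp 1 \<le> \<epsilon> * sketch_width \<epsilon>"
proof -
  have "exp 1 / \<epsilon> \<le> sketch_width \<epsilon>"
    unfolding sketch_width_def using real_nat_ceiling_ge[of "exp 1 / \<epsilon>"] by simp
  then show ?thesis using assms by (simp add: pos_divide_le_eq mult.commute)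
qed

lemma exp_neg_sketch_depth_le:
  assumes "0 < \<delta>"
  shows "exp (- real (sketch_depth \<delta>)) \<le> \<delta>"
proof -
  have "- ln \<delta> \<le> real (sketch_depth \<delta>)"
    using real_nat_ceiling_ge[of "ln (1 / \<delta>)"] assms by (simp add: sketch_depth_def ln_div)
  then have "exp (- real (sketch_depth \<delta>)) \<le> exp (ln \<delta>)" by simp
  then show ?thesis using assms by simp
qed

lemma prob_all_rows_false_positives_gt_le:
  assumes "finite R" "\<forall>i\<in>{1..p}. pairwise_indep_family (H i) (D i) (sketch_width \<epsilon>)"
    and "\<forall>r\<in>R. \<forall>i\<in>{1..p}. snd r i \<in> D i" "\<forall>i\<in>{1..p}. q i \<in> D i" "\<epsilon> > 0"
  shows "measure_pmf.prob (hash_choice p d H)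
           {hs. \<forall>j\<in>{1..d}. \<epsilon> * card R < false_positives {1..p} (\<lambda>i. hs (i, j)) R q}
           \<le> exp (- real d)"
proof -
  let ?row = "pmf_of_set (PiE {1..p} H)"
  define bad where "bad t \<longleftrightarrow> \<epsilon> * card R < false_positives {1..p} t R q" for t
  have "measure_pmf.prob ?row {t. bad t} * exp 1
      \<le> measure_pmf.prob ?row {t. bad t} * (\<epsilon> * sketch_width \<epsilon>)"
    using exp_one_le_mult_sketch_width[OF assms(5)] by (simp add: mult_left_mono)
  also have "\<dots> \<le> 1"
    unfolding bad_def using assms by (intro prob_false_positives_gt_le) auto
  finally have "measure_pmf.prob ?row {t. bad t} \<le> exp (- 1)"
    by (simp add: exp_minus field_simps)
  then have "measure_pmf.prob ?row {t. bad t} ^ d \<le> exp (- 1) ^ d"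
    by (simp add: power_mono)
  also have "\<dots> = exp (- real d)" by (simp flip: exp_of_nat_mult)
  finally show ?thesis
    unfolding hash_choice_def bad_def[symmetric]
    using prob_all_rows_pmf_of_set_PiE[of "{1..p}" "{1..d}" H bad] assms(2)
    by (auto simp: pairwise_indep_family_def)
qed

theorem lemma3p1:
  fixes \<epsilon> \<delta> :: real and p :: nat
    and D :: "nat \<Rightarrow> 'a set" and H :: "nat \<Rightarrow> ('a \<Rightarrow> nat) set"
    and rs :: "('b, 'a) srecord list" and q :: "nat \<Rightarrow> 'a"
  assumes "\<epsilon> > 0" and "0 < \<delta>" and "\<delta> < 1" and "p \<ge> 1"
    and "\<forall>i\<in>{1..p}. pairwise_indep_family (H i) (D i) (sketch_width \<epsilon>)"
    and "distinct (map fst rs)"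
    and "\<forall>r\<in>set rs. \<forall>i\<in>{1..p}. snd r i \<in> D i"
    and "\<forall>i\<in>{1..p}. q i \<in> D i"
  shows "measure_pmf.prob (hash_choice p (sketch_depth \<delta>) H)
           {hs. \<bar>real (estimate p (sketch_depth \<delta>) hs rs q) - real (true_freq p rs q)\<bar>
                  \<le> \<epsilon> * real (length rs)} \<ge> 1 - \<delta>"
proof -
  define d where "d = sketch_depth \<delta>"
  define E where "E = {hs. \<bar>real (estimate p d hs rs q) - real (true_freq p rs q)\<bar> \<le> \<epsilon> * real (length rs)}"
  define all_bad where
    "all_bad = {hs. \<forall>j\<in>{1..d}. \<epsilon> * card (set rs) < false_positives {1..p} (\<lambda>i. hs (i, j)) (set rs) q}"
  let ?M = "hash_choice p d H"
  have "UNIV - all_bad \<subseteq> E"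
  proof
    fix hs assume "hs \<in> UNIV - all_bad"
    then obtain j where "j \<in> {1..d}"
      and "false_positives {1..p} (\<lambda>i. hs (i, j)) (set rs) q \<le> \<epsilon> * card (set rs)"
      unfolding all_bad_def by (auto simp: not_less)
    moreover have "card (set rs) = length rs" using assms(6) by (simp add: distinct_map distinct_card)
    ultimately show "hs \<in> E"
      using estimate_error_le_false_positives[OF assms(6,4), of j d hs q] unfolding E_def by simp
  qed
  then have "measure_pmf.prob ?M (UNIV - all_bad) \<le> measure_pmf.prob ?M E"
    by (rule measure_pmf.finite_measure_mono) simp
  then have "1 - measure_pmf.prob ?M all_bad \<le> measure_pmf.prob ?M E"
    using measure_pmf.prob_compl[of all_bad ?M] by simp
  moreover have "measure_pmf.prob ?M all_bad \<le> exp (- real d)"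
    unfolding all_bad_def using assms by (intro prob_all_rows_false_positives_gt_le) auto
  ultimately show ?thesis
    using exp_neg_sketch_depth_le[OF assms(2)] unfolding d_def E_def by linarith
qed

end
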